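(* Let $X,Y$ be unbounded balleans such that the product ballean $X\times Y$ is normal. Then: (1) $\operatorname{add}(\mathcal B_X)=\operatorname{cof}(\mathcal B_X)=\operatorname{add}(\mathcal B_Y)=\operatorname{cof}(\mathcal B_Y)$; (2) the bornology $\mathcal B_{X\times Y}$ has a linearly ordered base; (3) the balleans $X$ and $Y$ have bounded growth.
   Context: A ballean is a pair $(X,\mathcal E_X)$ where $X$ is a set and $\mathcal E_X$ is a family of subsets of $X\times X$ (called entourages) such that: each $E\in\mathcal E_X$ contains the diagonal $\Delta_X$; for any $E,F\in\mathcal E_X$ there is $D\in\mathcal E_X$ with $E\circ F^{-1}\subset D$ (composition $E\circ F=\{(x,z):\exists y\ (x,y)\in E,(y,z)\in F\}$, inverse $F^{-1}=\{(y,x):(x,y)\in F\}$); and $\bigcup\mathcal E_X=X\times X$. For $E\in\mathcal E_X$, $x\in X$, $A\subset X$: $E[x]=\{y:(x,y)\in E\}$, $E[A]=\bigcup_{a\in A}E[a]$. $B\subset X$ is bounded if $B\subset E[x]$ for some $E\in\mathcal E_X$, $x\in X$; $\mathcal B_X$ is the family of bounded sets (bornology), ordered by inclusion; $X$ is unbounded if $X\notin\mathcal B_X$. Sets $A,B$ are asymptotically disjoint if $E[A]\cap E[B]\in\mathcal B_X$ for all $E\in\mathcal E_X$; $U$ is an asymptotic neighborhood of $A$ if $E[A]\setminus U\in\mathcal B_X$ for all $E$; $X$ is normal if any two asymptotically disjoint sets have disjoint asymptotic neighborhoods. The product $X\times Y$ of balleans has entourages $\{((x,y),(x',y')):(x,x')\in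 E_1,(y,y')\in E_2\}$ for $E_1\in\mathcal E_X$, $E_2\in\mathcal E_Y$. For a poset $P$, $\operatorname{add}(P)$ is the least cardinality of a subset of $P$ without upper bound and $\operatorname{cof}(P)$ the least cardinality of a cofinal subset (both $=1$ if $P$ has a largest element). A linearly ordered base of $\mathcal B_X$ is a subfamily linearly ordered by inclusion such that each bounded set is contained in a member of it. A ballean $X$ has bounded growth if there is $G\subset X\times X$ such that $G[B]$ is bounded for every bounded $B\subset X$, and for every $E\in\mathcal E_X$ there is a bounded $B\subset X$ with $E[x]\subset G[x]$ for all $x\in X\setminus B$. *)

theory Defs
  imports Main
begin

text \<open>A ballean on the type 'a (its support is UNIV), given by its family of entourages.
  Composition E o F in the paper is relcomp (E O F); F^-1 is converse.\<close>
definition ballean :: "('a \<times> 'a) set set \<Rightarrow> bool" where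
  "ballean \<E> \<longleftrightarrow> (\<forall>E\<in>\<E>. Id \<subseteq> E) \<and>
     (\<forall>E\<in>\<E>. \<forall>F\<in>\<E>. \<exists>D\<in>\<E>. E O converse F \<subseteq> D) \<and> \<Union>\<E> = UNIV"

text \<open>E[x] = E `` {x}, E[A] = E `` A.\<close>
definition bbounded :: "('a \<times> 'a) set set \<Rightarrow> 'a set \<Rightarrow> bool" where
  "bbounded \<E> B \<longleftrightarrow> (\<exists>E\<in>\<E>. \<exists>x. B \<subseteq> E `` {x})"

definition bornology :: "('a \<times> 'a) set set \<Rightarrow> 'a set set" where
  "bornology \<E> = {B. bbounded \<E> B}"

definition unbounded_ballean :: "('a \<times> 'a) set set \<Rightarrow> bool" where
  "unbounded_ballean \<E> \<longleftrightarrow> \<not> bbounded \<E> UNIV"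

definition asymp_disjoint :: "('a \<times> 'a) set set \<Rightarrow> 'a set \<Rightarrow> 'a set \<Rightarrow> bool" where
  "asymp_disjoint \<E> A B \<longleftrightarrow> (\<forall>E\<in>\<E>. bbounded \<E> (E `` A \<inter> E `` B))"

definition asymp_nbhd :: "('a \<times> 'a) set set \<Rightarrow> 'a set \<Rightarrow> 'a set \<Rightarrow> bool" where
  "asymp_nbhd \<E> U A \<longleftrightarrow> (\<forall>E\<in>\<E>. bbounded \<E> (E `` A - U))"

definition normal_ballean :: "('a \<times> 'a) set set \<Rightarrow> bool" where
  "normal_ballean \<E> \<longleftrightarrow> (\<forall>A B. asymp_disjoint \<E> A B \<longrightarrow>
     (\<exists>U V. asymp_nbhd \<E> U A \<and> asymp_nbhd \<E> V B \<and> U \<inter> V = {}))"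

definition prod_ballean :: "('a \<times> 'a) set set \<Rightarrow> ('b \<times> 'b) set set \<Rightarrow> (('a \<times> 'b) \<times> ('a \<times> 'b)) set set" where
  "prod_ballean \<E> \<F> = {{((x,y),(x',y')). (x,x') \<in> E1 \<and> (y,y') \<in> E2} | E1 E2. E1 \<in> \<E> \<and> E2 \<in> \<F>}"

definition has_ub :: "'a set set \<Rightarrow> 'a set set \<Rightarrow> bool" where
  "has_ub P F \<longleftrightarrow> (\<exists>u\<in>P. \<forall>A\<in>F. A \<subseteq> u)"

definition cofinal_in :: "'a set set \<Rightarrow> 'a set set \<Rightarrow> bool" where
  "cofinal_in P F \<longleftrightarrow> F \<subseteq> P \<and> (\<forall>A\<in>P. \<exists>C\<in>F. A \<subseteq> C)"

definition is_add :: "'a set set \<Rightarrow> 'a set set \<Rightarrow> bool" where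
  "is_add P F \<longleftrightarrow> F \<subseteq> P \<and> \<not> has_ub P F \<and>
     (\<forall>G. G \<subseteq> P \<and> \<not> has_ub P G \<longrightarrow> (card_of F, card_of G) \<in> ordLeq)"

definition is_cof :: "'a set set \<Rightarrow> 'a set set \<Rightarrow> bool" where
  "is_cof P F \<longleftrightarrow> cofinal_in P F \<and>
     (\<forall>G. cofinal_in P G \<longrightarrow> (card_of F, card_of G) \<in> ordLeq)"

definition has_linear_base :: "('a \<times> 'a) set set \<Rightarrow> bool" where
  "has_linear_base \<E> \<longleftrightarrow> (\<exists>L \<subseteq> bornology \<E>. (\<forall>A\<in>L. \<forall>B\<in>L. A \<subseteq> B \<or> B \<subseteq> A) \<and>
     (\<forall>B\<in>bornology \<E>. \<exists>C\<in>L. B \<subseteq> C))"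

definition bounded_growth :: "('a \<times> 'a) set set \<Rightarrow> bool" where
  "bounded_growth \<E> \<longleftrightarrow> (\<exists>G. (\<forall>B. bbounded \<E> B \<longrightarrow> bbounded \<E> (G `` B)) \<and>
     (\<forall>E\<in>\<E>. \<exists>B. bbounded \<E> B \<and> (\<forall>x. x \<notin> B \<longrightarrow> E `` {x} \<subseteq> G `` {x})))"

end

theory Submission
  imports Defs
begin

text \<open>
  The axes \<open>X \<times> {y0}\<close> and \<open>{x0} \<times> Y\<close> are asymptotically disjoint, so normality of \<open>X \<times> Y\<close>
  separates them. Reading off the separating neighbourhoods gives maps \<open>\<Phi>\<close>, \<open>\<Psi>\<close> between the
  bornologies such that for bounded \<open>C \<subseteq> X\<close>, \<open>D \<subseteq> Y\<close> either \<open>C \<subseteq> \<Phi> D\<close> or \<open>D \<subseteq> \<Psi> C\<close>.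
  Hence \<open>\<Phi>\<close> maps every unbounded family of bounded subsets of \<open>Y\<close> to a cofinal family of
  bounded subsets of \<open>X\<close>, so \<open>cof \<B>\<^sub>X \<le> add \<B>\<^sub>Y\<close>, and symmetrically; with \<open>add \<le> cof\<close>
  all four cardinals coincide. Well-order a cofinal family of this size \<open>\<kappa>\<close>: every proper
  initial segment indexes fewer than \<open>add\<close> sets, so closing up under initial segments yields
  increasing cofinal \<open>\<kappa>\<close>-chains in both bornologies, whose products form a linear base of
  \<open>X \<times> Y\<close>. The two chains also yield a map \<open>p : X \<rightarrow> Y\<close> along which boundedness is preserved
  and reflected. Its graph is asymptotically disjoint from a horizontal axis, and a neighbourhood
  of the graph separating it from the axis defines the relation witnessing bounded growth of
  \<open>X\<close>; for \<open>Y\<close> swap the factors.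
\<close>

lemma ballean_entourage_containing: "ballean \<E> \<Longrightarrow> \<exists>E\<in>\<E>. (x, y) \<in> E"
  unfolding ballean_def by blast

lemma ballean_Id_subset: "ballean \<E> \<Longrightarrow> E \<in> \<E> \<Longrightarrow> Id \<subseteq> E"
  unfolding ballean_def by blast

lemma ballean_converse:
  assumes "ballean \<E>" "F \<in> \<E>"
  shows "\<exists>D\<in>\<E>. converse F \<subseteq> D"
proof -
  obtain D where "D \<in> \<E>" "F O converse F \<subseteq> D"
    using assms unfolding ballean_def by meson
  moreover have "converse F \<subseteq> F O converse F"
    using ballean_Id_subset[OF assms] by blast
  ultimately show ?thesis by blast
qed

lemma ballean_relcomp:
  assumes "ballean \<E>" "E \<in> \<E>" "F \<in> \<E>"
  shows "\<exists>D\<in>\<E>. E O F \<subseteq> D"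
proof -
  obtain F' where F': "F' \<in> \<E>" "converse F \<subseteq> F'"
    using ballean_converse assms(1,3) by blast
  obtain D where "D \<in> \<E>" "E O converse F' \<subseteq> D"
    using assms(1,2) F'(1) unfolding ballean_def by meson
  moreover have "E O F \<subseteq> E O converse F'"
    using F'(2) by auto
  ultimately show ?thesis by blast
qed

lemma mem_bornology_iff [simp]: "B \<in> bornology \<E> \<longleftrightarrow> bbounded \<E> B"
  unfolding bornology_def by simp

lemma bbounded_at:
  assumes "ballean \<E>" "bbounded \<E> B"
  shows "\<exists>E\<in>\<E>. B \<subseteq> E `` {x}"
proof -
  obtain E z where E: "E \<in> \<E>" "B \<subseteq> E `` {z}"
    using assms(2) unfolding bbounded_def by blast
  obtain H where H: "H \<in> \<E>" "(x, z) \<in> H"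
    using ballean_entourage_containing[OF assms(1)] by blast
  obtain D where "D \<in> \<E>" "H O E \<subseteq> D"
    using ballean_relcomp[OF assms(1) H(1) E(1)] by blast
  then show ?thesis
    using E(2) H(2) by blast
qed

lemma bbounded_subset: "bbounded \<E> B \<Longrightarrow> A \<subseteq> B \<Longrightarrow> bbounded \<E> A"
  unfolding bbounded_def by (meson order_trans)

lemma bbounded_singleton:
  assumes "ballean \<E>"
  shows "bbounded \<E> {x}"
proof -
  obtain E where "E \<in> \<E>" "(x, x) \<in> E"
    using ballean_entourage_containing[OF assms] by blast
  then show ?thesis
    unfolding bbounded_def by blast
qed

lemma bbounded_Un:
  assumes "ballean \<E>" "bbounded \<E> A" "bbounded \<E> B"
  shows "bbounded \<E> (A \<union> B)"
proof -
  fix x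
  obtain E1 E2 where E: "E1 \<in> \<E>" "A \<subseteq> E1 `` {x}" "E2 \<in> \<E>" "B \<subseteq> E2 `` {x}"
    using bbounded_at assms by meson
  obtain D where D: "D \<in> \<E>" "E1 O E2 \<subseteq> D"
    using ballean_relcomp[OF assms(1) E(1,3)] by blast
  have "Id \<subseteq> E1" "Id \<subseteq> E2"
    using ballean_Id_subset assms(1) E(1,3) by auto
  then have "A \<union> B \<subseteq> (E1 O E2) `` {x}"
    using E(2,4) by auto
  then have "A \<union> B \<subseteq> D `` {x}"
    using D(2) by blast
  then show ?thesis
    unfolding bbounded_def using D(1) by blast
qed

lemma bbounded_Image:
  assumes "ballean \<E>" "bbounded \<E> B" "E \<in> \<E>"
  shows "bbounded \<E> (E `` B)"
proof -
  fix x
  obtain H where H: "H \<in> \<E>" "B \<subseteq> H `` {x}"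
    using bbounded_at[OF assms(1,2)] by blast
  obtain D where D: "D \<in> \<E>" "H O E \<subseteq> D"
    using ballean_relcomp[OF assms(1) H(1) assms(3)] by blast
  have "E `` B \<subseteq> D `` {x}"
    using H(2) D(2) by blast
  then show ?thesis
    unfolding bbounded_def using D(1) by blast
qed

lemma bbounded_converse_Image:
  assumes "ballean \<E>" "bbounded \<E> B" "E \<in> \<E>"
  shows "bbounded \<E> (converse E `` B)"
proof -
  obtain D where D: "D \<in> \<E>" "converse E \<subseteq> D"
    using ballean_converse[OF assms(1,3)] by blast
  then have "converse E `` B \<subseteq> D `` B"
    by blast
  then show ?thesis
    using bbounded_Image[OF assms(1,2) D(1)] bbounded_subset by blast
qed

lemma ex_not_in_bbounded: "unbounded_ballean \<E> \<Longrightarrow> bbounded \<E> B \<Longrightarrow> \<exists>y. y \<notin> B"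
  unfolding unbounded_ballean_def using bbounded_subset by blast

definition prod_entourage ::
  "('a \<times> 'a) set \<Rightarrow> ('b \<times> 'b) set \<Rightarrow> (('a \<times> 'b) \<times> ('a \<times> 'b)) set" where
  "prod_entourage E1 E2 = {((x, y), (x', y')). (x, x') \<in> E1 \<and> (y, y') \<in> E2}"

lemma mem_prod_entourage [simp]:
  "(p, q) \<in> prod_entourage E1 E2 \<longleftrightarrow> (fst p, fst q) \<in> E1 \<and> (snd p, snd q) \<in> E2"
  unfolding prod_entourage_def by (cases p, cases q) simp

lemma prod_ballean_eq:
  "prod_ballean \<E>X \<E>Y = {prod_entourage E1 E2 | E1 E2. E1 \<in> \<E>X \<and> E2 \<in> \<E>Y}"
  unfolding prod_ballean_def prod_entourage_def by simp

lemma prod_entourage_in_prod_ballean: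
  "E1 \<in> \<E>X \<Longrightarrow> E2 \<in> \<E>Y \<Longrightarrow> prod_entourage E1 E2 \<in> prod_ballean \<E>X \<E>Y"
  unfolding prod_ballean_eq by blast

lemma prod_entourage_Image [simp]: "prod_entourage E1 E2 `` (A \<times> B) = E1 `` A \<times> E2 `` B"
  unfolding prod_entourage_def by force

lemma prod_entourage_Image_singleton: "prod_entourage E1 E2 `` {p} = E1 `` {fst p} \<times> E2 `` {snd p}"
  using prod_entourage_Image[of E1 E2 "{fst p}" "{snd p}"] by simp

lemma bbounded_prod_ballean_iff:
  "bbounded (prod_ballean \<E>X \<E>Y) S \<longleftrightarrow>
    (\<exists>C D. bbounded \<E>X C \<and> bbounded \<E>Y D \<and> S \<subseteq> C \<times> D)"
proof
  assume "bbounded (prod_ballean \<E>X \<E>Y) S"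
  then obtain E1 E2 p where "E1 \<in> \<E>X" "E2 \<in> \<E>Y" "S \<subseteq> prod_entourage E1 E2 `` {p}"
    unfolding bbounded_def prod_ballean_eq by blast
  then show "\<exists>C D. bbounded \<E>X C \<and> bbounded \<E>Y D \<and> S \<subseteq> C \<times> D"
    unfolding bbounded_def prod_entourage_Image_singleton by blast
next
  assume "\<exists>C D. bbounded \<E>X C \<and> bbounded \<E>Y D \<and> S \<subseteq> C \<times> D"
  then obtain E1 E2 x y where "E1 \<in> \<E>X" "E2 \<in> \<E>Y" "S \<subseteq> prod_entourage E1 E2 `` {(x, y)}"
    unfolding bbounded_def prod_entourage_Image_singleton by fastforce
  then show "bbounded (prod_ballean \<E>X \<E>Y) S"
    unfolding bbounded_def using prod_entourage_in_prod_ballean by blast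
qed

section \<open>Transport of normality along bijections\<close>

definition map_ballean :: "('a \<Rightarrow> 'b) \<Rightarrow> ('a \<times> 'a) set set \<Rightarrow> ('b \<times> 'b) set set" where
  "map_ballean f \<E> = (\<lambda>E. map_prod f f ` E) ` \<E>"

lemma map_prod_Image_image: "inj f \<Longrightarrow> (map_prod f f ` E) `` (f ` A) = f ` (E `` A)"
  unfolding inj_def by force

lemma bbounded_map_ballean_image_iff:
  assumes "bij f"
  shows "bbounded (map_ballean f \<E>) (f ` B) \<longleftrightarrow> bbounded \<E> B"
proof -
  have inj: "inj f"
    using assms by (rule bij_is_inj)
  have base_point: "(\<exists>y. S \<subseteq> R `` {y}) \<longleftrightarrow> (\<exists>x. S \<subseteq> R `` (f ` {x}))"
    for S :: "'b set" and R :: "('b \<times> 'b) set"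
    using bij_is_surj[OF assms] by (metis image_empty image_insert surjD)
  have "bbounded (map_ballean f \<E>) (f ` B) \<longleftrightarrow>
      (\<exists>E\<in>\<E>. \<exists>x. f ` B \<subseteq> f ` (E `` {x}))"
    unfolding bbounded_def map_ballean_def bex_simps base_point map_prod_Image_image[OF inj] by (rule refl)
  also have "\<dots> \<longleftrightarrow> bbounded \<E> B"
    unfolding bbounded_def inj_image_subset_iff[OF inj] ..
  finally show ?thesis .
qed

lemma asymp_disjoint_map_ballean_image_iff:
  assumes "bij f"
  shows "asymp_disjoint (map_ballean f \<E>) (f ` A) (f ` B) \<longleftrightarrow> asymp_disjoint \<E> A B"
  unfolding asymp_disjoint_def map_ballean_def ball_simps
  by (simp add: map_prod_Image_image bij_is_inj[OF assms] image_Int[symmetric]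
      bbounded_map_ballean_image_iff[OF assms, unfolded map_ballean_def])

lemma asymp_nbhd_map_ballean_image_iff:
  assumes "bij f"
  shows "asymp_nbhd (map_ballean f \<E>) (f ` U) (f ` A) \<longleftrightarrow> asymp_nbhd \<E> U A"
  unfolding asymp_nbhd_def map_ballean_def ball_simps
  by (simp add: map_prod_Image_image bij_is_inj[OF assms] image_set_diff[symmetric]
      bbounded_map_ballean_image_iff[OF assms, unfolded map_ballean_def])

lemma normal_map_ballean:
  assumes f: "bij f" and normal: "normal_ballean \<E>"
  shows "normal_ballean (map_ballean f \<E>)"
  unfolding normal_ballean_def
proof (intro allI impI)
  fix A B
  assume disjoint: "asymp_disjoint (map_ballean f \<E>) A B"
  obtain A0 B0 where A: "A = f ` A0" and B: "B = f ` B0"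
    using bij_is_surj[OF f] surj_image_vimage_eq by metis
  then have "asymp_disjoint \<E> A0 B0"
    using disjoint asymp_disjoint_map_ballean_image_iff[OF f] by simp
  then obtain U V where "asymp_nbhd \<E> U A0" "asymp_nbhd \<E> V B0" "U \<inter> V = {}"
    using normal unfolding normal_ballean_def by blast
  then have "asymp_nbhd (map_ballean f \<E>) (f ` U) A" "asymp_nbhd (map_ballean f \<E>) (f ` V) B"
      "f ` U \<inter> f ` V = {}"
    using A B asymp_nbhd_map_ballean_image_iff[OF f]
    by (simp_all add: image_Int[OF bij_is_inj[OF f], symmetric])
  then show "\<exists>U V. asymp_nbhd (map_ballean f \<E>) U A \<and> asymp_nbhd (map_ballean f \<E>) V B \<and> U \<inter> V = {}"
    by blast
qed

lemma map_prod_swap_prod_entourage: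
  "map_prod prod.swap prod.swap ` prod_entourage E1 E2 = prod_entourage E2 E1"
proof
  show "prod_entourage E2 E1 \<subseteq> map_prod prod.swap prod.swap ` prod_entourage E1 E2"
  proof clarify
    fix a b c d
    assume "((a, b), (c, d)) \<in> prod_entourage E2 E1"
    then have "((b, a), (d, c)) \<in> prod_entourage E1 E2"
      by simp
    then show "((a, b), (c, d)) \<in> map_prod prod.swap prod.swap ` prod_entourage E1 E2"
      by (rule rev_image_eqI) simp
  qed
qed auto

lemma prod_ballean_eq_image: "prod_ballean \<E>X \<E>Y = case_prod prod_entourage ` (\<E>X \<times> \<E>Y)"
  unfolding prod_ballean_eq by (auto simp del: mem_prod_entourage)

lemma prod_ballean_swap: "prod_ballean \<E>Y \<E>X = map_ballean prod.swap (prod_ballean \<E>X \<E>Y)"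
proof -
  have "map_ballean prod.swap (prod_ballean \<E>X \<E>Y) = case_prod prod_entourage ` prod.swap ` (\<E>X \<times> \<E>Y)"
    unfolding map_ballean_def prod_ballean_eq_image image_image
    by (intro image_cong refl) (simp add: case_prod_beta map_prod_swap_prod_entourage)
  then show ?thesis
    by (simp add: prod_ballean_eq_image product_swap)
qed

lemma normal_prod_ballean_swap:
  "normal_ballean (prod_ballean \<E>X \<E>Y) \<Longrightarrow> normal_ballean (prod_ballean \<E>Y \<E>X)"
  by (subst prod_ballean_swap) (simp add: normal_map_ballean)

section \<open>Separating the axes of a normal product\<close>

lemma asymp_nbhd_prod_ballean_rectangle:
  assumes "asymp_nbhd (prod_ballean \<E>X \<E>Y) U A" "E1 \<in> \<E>X" "E2 \<in> \<E>Y"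
  obtains C D where "bbounded \<E>X C" "bbounded \<E>Y D" "prod_entourage E1 E2 `` A - U \<subseteq> C \<times> D"
proof -
  have "bbounded (prod_ballean \<E>X \<E>Y) (prod_entourage E1 E2 `` A - U)"
    using assms prod_entourage_in_prod_ballean unfolding asymp_nbhd_def by blast
  then show thesis
    using that unfolding bbounded_prod_ballean_iff by blast
qed

lemma asymp_nbhd_axis_contains_strip:
  assumes "ballean \<E>X" "ballean \<E>Y" "asymp_nbhd (prod_ballean \<E>X \<E>Y) U (UNIV \<times> {y0})"
    and "bbounded \<E>Y D"
  shows "\<exists>C. bbounded \<E>X C \<and> (- C) \<times> D \<subseteq> U"
proof -
  obtain E1 where E1: "E1 \<in> \<E>X"
    using ballean_entourage_containing[OF assms(1)] by blast
  obtain E2 where E2: "E2 \<in> \<E>Y" "D \<subseteq> E2 `` {y0}"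
    using bbounded_at[OF assms(2,4)] by blast
  obtain C D' where C: "bbounded \<E>X C" "prod_entourage E1 E2 `` (UNIV \<times> {y0}) - U \<subseteq> C \<times> D'"
    using asymp_nbhd_prod_ballean_rectangle[OF assms(3) E1 E2(1)] .
  have "UNIV \<times> D \<subseteq> prod_entourage E1 E2 `` (UNIV \<times> {y0})"
    using ballean_Id_subset[OF assms(1) E1] E2(2) by auto
  then have "(- C) \<times> D \<subseteq> U"
    using C(2) by blast
  then show ?thesis
    using C(1) by blast
qed

definition bounded_dichotomy :: "('a \<times> 'a) set set \<Rightarrow> ('b \<times> 'b) set set \<Rightarrow>
    ('b set \<Rightarrow> 'a set) \<Rightarrow> ('a set \<Rightarrow> 'b set) \<Rightarrow> bool" where
  "bounded_dichotomy \<E>X \<E>Y \<Phi> \<Psi> \<longleftrightarrow>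
     (\<forall>D. bbounded \<E>Y D \<longrightarrow> bbounded \<E>X (\<Phi> D)) \<and> (\<forall>C. bbounded \<E>X C \<longrightarrow> bbounded \<E>Y (\<Psi> C)) \<and>
     (\<forall>C D. bbounded \<E>X C \<longrightarrow> bbounded \<E>Y D \<longrightarrow> C \<subseteq> \<Phi> D \<or> D \<subseteq> \<Psi> C)"

lemma bounded_dichotomyD:
  assumes "bounded_dichotomy \<E>X \<E>Y \<Phi> \<Psi>"
  shows "bbounded \<E>Y D \<Longrightarrow> bbounded \<E>X (\<Phi> D)" and "bbounded \<E>X C \<Longrightarrow> bbounded \<E>Y (\<Psi> C)"
    and "bbounded \<E>X C \<Longrightarrow> bbounded \<E>Y D \<Longrightarrow> C \<subseteq> \<Phi> D \<or> D \<subseteq> \<Psi> C"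
  using assms unfolding bounded_dichotomy_def by blast+

lemma bounded_dichotomy_sym: "bounded_dichotomy \<E>X \<E>Y \<Phi> \<Psi> \<Longrightarrow> bounded_dichotomy \<E>Y \<E>X \<Psi> \<Phi>"
  unfolding bounded_dichotomy_def by blast

lemma asymp_disjoint_axes:
  "asymp_disjoint (prod_ballean \<E>X \<E>Y) (UNIV \<times> {y0}) ({x0} \<times> UNIV)"
  unfolding asymp_disjoint_def
proof
  fix P
  assume "P \<in> prod_ballean \<E>X \<E>Y"
  then obtain E1 E2 where E: "E1 \<in> \<E>X" "E2 \<in> \<E>Y" "P = prod_entourage E1 E2"
    unfolding prod_ballean_eq by blast
  then have "P `` (UNIV \<times> {y0}) \<inter> P `` ({x0} \<times> UNIV) \<subseteq> E1 `` {x0} \<times> E2 `` {y0}"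
    by auto
  moreover have "bbounded \<E>X (E1 `` {x0})" "bbounded \<E>Y (E2 `` {y0})"
    unfolding bbounded_def using E(1,2) by blast+
  ultimately show "bbounded (prod_ballean \<E>X \<E>Y) (P `` (UNIV \<times> {y0}) \<inter> P `` ({x0} \<times> UNIV))"
    unfolding bbounded_prod_ballean_iff by blast
qed

lemma bounded_dichotomy_if_normal_prod:
  assumes bX: "ballean \<E>X" and bY: "ballean \<E>Y" and normal: "normal_ballean (prod_ballean \<E>X \<E>Y)"
  shows "\<exists>\<Phi> \<Psi>. bounded_dichotomy \<E>X \<E>Y \<Phi> \<Psi>"
proof -
  fix x0 y0
  obtain U V where U: "asymp_nbhd (prod_ballean \<E>X \<E>Y) U (UNIV \<times> {y0})"
    and V: "asymp_nbhd (prod_ballean \<E>X \<E>Y) V ({x0} \<times> UNIV)" and "U \<inter> V = {}"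
    using normal asymp_disjoint_axes[of \<E>X \<E>Y y0 x0] unfolding normal_ballean_def by blast
  have V': "asymp_nbhd (prod_ballean \<E>Y \<E>X) (prod.swap ` V) (UNIV \<times> {x0})"
    using iffD2[OF asymp_nbhd_map_ballean_image_iff[OF bij_swap] V]
    unfolding prod_ballean_swap[symmetric] product_swap .
  have "\<exists>D. bbounded \<E>Y D \<and> C \<times> (- D) \<subseteq> V" if C: "bbounded \<E>X C" for C
  proof -
    obtain D where D: "bbounded \<E>Y D" "(- D) \<times> C \<subseteq> prod.swap ` V"
      using asymp_nbhd_axis_contains_strip[OF bY bX V' C] by blast
    have "C \<times> (- D) \<subseteq> prod.swap ` prod.swap ` V"
      using image_mono[OF D(2), of prod.swap] by (simp add: product_swap)
    then show ?thesis
      using D(1) by (auto simp: image_image)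
  qed
  then obtain \<Psi> where \<Psi>: "\<And>C. bbounded \<E>X C \<Longrightarrow> bbounded \<E>Y (\<Psi> C) \<and> C \<times> (- \<Psi> C) \<subseteq> V"
    by metis
  obtain \<Phi> where \<Phi>: "\<And>D. bbounded \<E>Y D \<Longrightarrow> bbounded \<E>X (\<Phi> D) \<and> (- \<Phi> D) \<times> D \<subseteq> U"
    using asymp_nbhd_axis_contains_strip[OF bX bY U] by metis
  have "C \<subseteq> \<Phi> D \<or> D \<subseteq> \<Psi> C" if "bbounded \<E>X C" "bbounded \<E>Y D" for C D
    using \<Phi>[OF that(2)] \<Psi>[OF that(1)] \<open>U \<inter> V = {}\<close> by blast
  then show ?thesis
    unfolding bounded_dichotomy_def using \<Phi> \<Psi> by blast
qed

section \<open>Additivity and cofinality of the bornologies\<close>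

lemma bornology_no_ub:
  assumes "ballean \<E>" "unbounded_ballean \<E>"
  shows "\<not> has_ub (bornology \<E>) (bornology \<E>)"
proof
  assume "has_ub (bornology \<E>) (bornology \<E>)"
  then obtain u where u: "bbounded \<E> u" "\<And>B. bbounded \<E> B \<Longrightarrow> B \<subseteq> u"
    unfolding has_ub_def by auto
  then have "UNIV \<subseteq> u"
    using bbounded_singleton[OF assms(1)] by blast
  then have "bbounded \<E> UNIV"
    by (rule bbounded_subset[OF u(1)])
  then show False
    using assms(2) unfolding unbounded_ballean_def by blast
qed

lemma bbounded_Union_if_has_ub: "has_ub (bornology \<E>) G \<Longrightarrow> bbounded \<E> (\<Union>G)"
  unfolding has_ub_def using bbounded_subset by (metis Sup_least mem_bornology_iff)

lemma has_ub_if_cofinal_in: "cofinal_in P F \<Longrightarrow> has_ub P F \<Longrightarrow> has_ub P P"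
  unfolding cofinal_in_def has_ub_def by (meson order_trans)

context
  includes cardinal_syntax
begin

lemma ex_card_of_minimal:
  assumes "Q S"
  shows "\<exists>T. Q T \<and> (\<forall>T'. Q T' \<longrightarrow> card_of T \<le>o card_of T')"
proof -
  obtain r where "r \<in> {card_of T | T. Q T}" "\<forall>r' \<in> {card_of T | T. Q T}. r \<le>o r'"
    using exists_minim_Well_order[of "{card_of T | T. Q T}"] assms card_of_Well_order by blast
  then show ?thesis
    by blast
qed

lemma is_add_exists: "\<not> has_ub P P \<Longrightarrow> \<exists>F. is_add P F"
  unfolding is_add_def using ex_card_of_minimal[of "\<lambda>G. G \<subseteq> P \<and> \<not> has_ub P G" P] by auto

lemma is_cof_exists: "\<exists>F. is_cof P F"
  unfolding is_cof_def using ex_card_of_minimal[of "cofinal_in P" P] by (auto simp: cofinal_in_def)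

lemma is_add_le_is_cof:
  assumes "\<not> has_ub P P" "is_add P F1" "is_cof P F2"
  shows "card_of F1 \<le>o card_of F2"
  using assms has_ub_if_cofinal_in[of P F2] unfolding is_add_def is_cof_def cofinal_in_def by blast

lemma has_ub_if_card_of_less_is_add:
  assumes "is_add P F" "G \<subseteq> P" "card_of G <o card_of F"
  shows "has_ub P G"
  using assms not_ordLess_ordLeq unfolding is_add_def by blast

lemma bounded_dichotomy_cofinal_in_image:
  assumes "bounded_dichotomy \<E>X \<E>Y \<Phi> \<Psi>" "G \<subseteq> bornology \<E>Y" "\<not> has_ub (bornology \<E>Y) G"
  shows "cofinal_in (bornology \<E>X) (\<Phi> ` G)"
  unfolding cofinal_in_def
proof
  show "\<Phi> ` G \<subseteq> bornology \<E>X"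
    using assms(2) bounded_dichotomyD(1)[OF assms(1)] by auto
  show "\<forall>C\<in>bornology \<E>X. \<exists>C'\<in>\<Phi> ` G. C \<subseteq> C'"
  proof
    fix C
    assume "C \<in> bornology \<E>X"
    then have C: "bbounded \<E>X C" "\<Psi> C \<in> bornology \<E>Y"
      using bounded_dichotomyD(2)[OF assms(1)] by auto
    then obtain D where D: "D \<in> G" "\<not> D \<subseteq> \<Psi> C"
      using assms(3) unfolding has_ub_def by blast
    moreover have "bbounded \<E>Y D"
      using D(1) assms(2) by auto
    ultimately have "C \<subseteq> \<Phi> D"
      using bounded_dichotomyD(3)[OF assms(1) C(1)] by blast
    then show "\<exists>C'\<in>\<Phi> ` G. C \<subseteq> C'"
      using D(1) by blast
  qed
qed

lemma is_cof_le_is_add_if_bounded_dichotomy: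
  assumes "bounded_dichotomy \<E>X \<E>Y \<Phi> \<Psi>" "is_cof (bornology \<E>X) F2" "is_add (bornology \<E>Y) F3"
  shows "card_of F2 \<le>o card_of F3"
proof -
  have "cofinal_in (bornology \<E>X) (\<Phi> ` F3)"
    using bounded_dichotomy_cofinal_in_image[OF assms(1)] assms(3) unfolding is_add_def by blast
  then have "card_of F2 \<le>o card_of (\<Phi> ` F3)"
    using assms(2) unfolding is_cof_def by blast
  then show ?thesis
    using card_of_image ordLeq_transitive by blast
qed

lemma bornology_add_cof_ordIso:
  assumes "ballean \<E>X" "ballean \<E>Y" "unbounded_ballean \<E>X" "unbounded_ballean \<E>Y"
    and dichotomy: "bounded_dichotomy \<E>X \<E>Y \<Phi> \<Psi>"
    and F: "is_add (bornology \<E>X) F1" "is_cof (bornology \<E>X) F2"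
      "is_add (bornology \<E>Y) F3" "is_cof (bornology \<E>Y) F4"
  shows "card_of F1 =o card_of F2 \<and> card_of F2 =o card_of F3 \<and> card_of F3 =o card_of F4"
proof -
  have 12: "card_of F1 \<le>o card_of F2" and 34: "card_of F3 \<le>o card_of F4"
    using is_add_le_is_cof[OF bornology_no_ub[OF assms(1,3)] F(1,2)]
      is_add_le_is_cof[OF bornology_no_ub[OF assms(2,4)] F(3,4)] .
  have 23: "card_of F2 \<le>o card_of F3" and 41: "card_of F4 \<le>o card_of F1"
    using is_cof_le_is_add_if_bounded_dichotomy[OF dichotomy F(2,3)]
      is_cof_le_is_add_if_bounded_dichotomy[OF bounded_dichotomy_sym[OF dichotomy] F(4,1)] .
  have "card_of F2 \<le>o card_of F1" "card_of F3 \<le>o card_of F2" "card_of F4 \<le>o card_of F3"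
    using ordLeq_transitive[OF 23 ordLeq_transitive[OF 34 41]]
      ordLeq_transitive[OF 34 ordLeq_transitive[OF 41 12]]
      ordLeq_transitive[OF 41 ordLeq_transitive[OF 12 23]] .
  then show ?thesis
    using 12 23 34 by (simp add: ordIso_iff_ordLeq)
qed

section \<open>Cofinal chains of bounded sets\<close>

definition cofinal_chain :: "('a \<times> 'a) set set \<Rightarrow> 'i rel \<Rightarrow> ('i \<Rightarrow> 'a set) \<Rightarrow> bool" where
  "cofinal_chain \<E> r M \<longleftrightarrow> (\<forall>i\<in>Field r. bbounded \<E> (M i)) \<and> (\<forall>i j. (i, j) \<in> r \<longrightarrow> M i \<subseteq> M j) \<and>
     (\<forall>C. bbounded \<E> C \<longrightarrow> (\<exists>i\<in>Field r. C \<subseteq> M i))"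

lemma cofinal_chainD:
  assumes "cofinal_chain \<E> r M"
  shows "i \<in> Field r \<Longrightarrow> bbounded \<E> (M i)" and "(i, j) \<in> r \<Longrightarrow> M i \<subseteq> M j"
    and "bbounded \<E> C \<Longrightarrow> \<exists>i\<in>Field r. C \<subseteq> M i"
  using assms unfolding cofinal_chain_def by blast+

definition segment_unions_bounded :: "('a \<times> 'a) set set \<Rightarrow> 'i rel \<Rightarrow> bool" where
  "segment_unions_bounded \<E> r \<longleftrightarrow>
     (\<forall>i\<in>Field r. \<forall>B. (\<forall>j\<in>underS r i. bbounded \<E> (B j)) \<longrightarrow> bbounded \<E> (\<Union>j\<in>underS r i. B j))"

lemma segment_unions_boundedD:
  "segment_unions_bounded \<E> r \<Longrightarrow> i \<in> Field r \<Longrightarrow> (\<And>j. j \<in> underS r i \<Longrightarrow> bbounded \<E> (B j)) \<Longrightarrow>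
    bbounded \<E> (\<Union>j\<in>underS r i. B j)"
  unfolding segment_unions_bounded_def by blast

lemma segment_unions_bounded_card_of:
  assumes "is_add (bornology \<E>) F" "card_of I \<le>o card_of F"
  shows "segment_unions_bounded \<E> (card_of I)"
  unfolding segment_unions_bounded_def
proof (intro ballI allI impI)
  fix i B
  assume i: "i \<in> Field (card_of I)" and B: "\<forall>j\<in>underS (card_of I) i. bbounded \<E> (B j)"
  have "card_of (B ` underS (card_of I) i) <o card_of F"
    using ordLess_ordLeq_trans[OF ordLeq_ordLess_trans[OF card_of_image
          card_of_underS[OF card_of_Card_order i]] assms(2)] .
  moreover have "B ` underS (card_of I) i \<subseteq> bornology \<E>"
    using B by auto
  ultimately have "has_ub (bornology \<E>) (B ` underS (card_of I) i)"
    using has_ub_if_card_of_less_is_add[OF assms(1)] by blast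
  then show "bbounded \<E> (\<Union>j\<in>underS (card_of I) i. B j)"
    by (rule bbounded_Union_if_has_ub)
qed

lemma bbounded_image_underS:
  assumes "ballean \<E>" "segment_unions_bounded \<E> r" "i \<in> Field r"
  shows "bbounded \<E> (q ` underS r i)"
proof -
  have "bbounded \<E> (\<Union>j\<in>underS r i. {q j})"
    using segment_unions_boundedD[OF assms(2,3)] bbounded_singleton[OF assms(1)] .
  then show ?thesis
    unfolding UNION_singleton_eq_range .
qed

lemma Well_order_total:
  "Well_order r \<Longrightarrow> i \<in> Field r \<Longrightarrow> j \<in> Field r \<Longrightarrow> (i, j) \<in> r \<or> (j, i) \<in> r"
  using wo_rel.TOTALS[of r] unfolding wo_rel_def by blast

lemma cofinal_chain_segment_closure:
  assumes wo: "Well_order r" and "ballean \<E>" "segment_unions_bounded \<E> r"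
    and B: "\<And>i. i \<in> Field r \<Longrightarrow> bbounded \<E> (B i)"
      "\<And>C. bbounded \<E> C \<Longrightarrow> \<exists>i\<in>Field r. C \<subseteq> B i"
  shows "cofinal_chain \<E> r (\<lambda>i. (\<Union>j\<in>underS r i. B j) \<union> B i)"
  unfolding cofinal_chain_def
proof (intro conjI allI impI ballI)
  fix i
  assume i: "i \<in> Field r"
  have "bbounded \<E> (\<Union>j\<in>underS r i. B j)"
    using segment_unions_boundedD[OF assms(3) i] B(1) by (auto simp: underS_def intro: FieldI1)
  then show "bbounded \<E> ((\<Union>j\<in>underS r i. B j) \<union> B i)"
    using bbounded_Un[OF assms(2)] B(1)[OF i] by blast
next
  fix i k
  assume ik: "(i, k) \<in> r"
  have "underS r i \<subseteq> underS r k"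
    using underS_incr[OF wo_rel.TRANS wo_rel.ANTISYM ik] wo unfolding wo_rel_def by blast
  moreover have "i = k \<or> i \<in> underS r k"
    using ik unfolding underS_def by blast
  ultimately show "(\<Union>j\<in>underS r i. B j) \<union> B i \<subseteq> (\<Union>j\<in>underS r k. B j) \<union> B k"
    by blast
next
  fix C
  assume "bbounded \<E> C"
  then obtain i where "i \<in> Field r" "C \<subseteq> B i"
    using B(2) by blast
  then show "\<exists>i\<in>Field r. C \<subseteq> (\<Union>j\<in>underS r i. B j) \<union> B i"
    by blast
qed

lemma bounded_dichotomy_cofinal_chain:
  assumes "ballean \<E>X" "unbounded_ballean \<E>X" and dichotomy: "bounded_dichotomy \<E>X \<E>Y \<Phi> \<Psi>"
    and M: "cofinal_chain \<E>X r M" and D: "bbounded \<E>Y D"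
  shows "\<exists>i\<in>Field r. D \<subseteq> \<Psi> (M i)"
proof -
  obtain x where "x \<notin> \<Phi> D"
    using ex_not_in_bbounded[OF assms(2) bounded_dichotomyD(1)[OF dichotomy D]] by blast
  moreover obtain i where i: "i \<in> Field r" "{x} \<subseteq> M i"
    using cofinal_chainD(3)[OF M bbounded_singleton[OF assms(1)]] by blast
  ultimately have "\<not> M i \<subseteq> \<Phi> D"
    by blast
  then have "D \<subseteq> \<Psi> (M i)"
    using bounded_dichotomyD(3)[OF dichotomy cofinal_chainD(1)[OF M i(1)] D] by blast
  then show ?thesis
    using i(1) by blast
qed

lemma cofinal_chains_exist:
  fixes \<E>X :: "('a \<times> 'a) set set" and \<E>Y :: "('b \<times> 'b) set set"
  assumes bX: "ballean \<E>X" and bY: "ballean \<E>Y"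
    and uX: "unbounded_ballean \<E>X" and uY: "unbounded_ballean \<E>Y"
    and dichotomy: "bounded_dichotomy \<E>X \<E>Y \<Phi> \<Psi>"
  obtains r :: "'a set rel" and MX MY where "Well_order r"
    "cofinal_chain \<E>X r MX" "cofinal_chain \<E>Y r MY"
    "segment_unions_bounded \<E>X r" "segment_unions_bounded \<E>Y r"
proof -
  obtain F1 F2 F3 F4 where F: "is_add (bornology \<E>X) F1" "is_cof (bornology \<E>X) F2"
      "is_add (bornology \<E>Y) F3" "is_cof (bornology \<E>Y) F4"
    using is_add_exists[OF bornology_no_ub[OF bX uX]] is_add_exists[OF bornology_no_ub[OF bY uY]]
      is_cof_exists by meson
  then have "card_of F2 \<le>o card_of F1" "card_of F2 \<le>o card_of F3"
    using bornology_add_cof_ordIso[OF bX bY uX uY dichotomy F] by (simp_all add: ordIso_iff_ordLeq)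
  \<comment> \<open>A proper initial segment of \<open>card_of F2\<close> is smaller than \<open>F2\<close>, hence than both additivities.\<close>
  then have small: "segment_unions_bounded \<E>X (card_of F2)" "segment_unions_bounded \<E>Y (card_of F2)"
    using segment_unions_bounded_card_of[OF F(1)] segment_unions_bounded_card_of[OF F(3)] by blast+
  have wo: "Well_order (card_of F2)"
    by (rule card_of_Well_order)
  have F2: "F2 \<subseteq> bornology \<E>X" "\<forall>C\<in>bornology \<E>X. \<exists>C'\<in>F2. C \<subseteq> C'"
    using F(2) unfolding is_cof_def cofinal_in_def by blast+
  define MX where "MX i = (\<Union>j\<in>underS (card_of F2) i. j) \<union> i" for i
  have MX: "cofinal_chain \<E>X (card_of F2) MX"
    unfolding MX_def
    by (rule cofinal_chain_segment_closure[OF wo bX small(1), of "\<lambda>i. i"]) (use F2 in \<open>auto simp: Field_card_of\<close>)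
  have "cofinal_chain \<E>Y (card_of F2) (\<lambda>i. (\<Union>j\<in>underS (card_of F2) i. \<Psi> (MX j)) \<union> \<Psi> (MX i))"
    using bounded_dichotomyD(2)[OF dichotomy cofinal_chainD(1)[OF MX]]
      bounded_dichotomy_cofinal_chain[OF bX uX dichotomy MX]
    by (rule cofinal_chain_segment_closure[OF wo bY small(2)])
  then show thesis
    using that[OF wo MX] small by blast
qed

lemma has_linear_base_prod_ballean:
  assumes wo: "Well_order r" and MX: "cofinal_chain \<E>X r MX" and MY: "cofinal_chain \<E>Y r MY"
  shows "has_linear_base (prod_ballean \<E>X \<E>Y)"
proof -
  define L where "L = (\<lambda>i. MX i \<times> MY i) ` Field r"
  have mono: "MX i \<times> MY i \<subseteq> MX k \<times> MY k" if "(i, k) \<in> r" for i k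
    using cofinal_chainD(2)[OF MX that] cofinal_chainD(2)[OF MY that] by blast
  have "bbounded (prod_ballean \<E>X \<E>Y) (MX i \<times> MY i)" if "i \<in> Field r" for i
    unfolding bbounded_prod_ballean_iff using cofinal_chainD(1)[OF MX that] cofinal_chainD(1)[OF MY that]
    by blast
  then have "L \<subseteq> bornology (prod_ballean \<E>X \<E>Y)"
    unfolding L_def by auto
  moreover have "A \<subseteq> B \<or> B \<subseteq> A" if AB: "A \<in> L" "B \<in> L" for A B
  proof -
    obtain i k where ik: "i \<in> Field r" "k \<in> Field r" "A = MX i \<times> MY i" "B = MX k \<times> MY k"
      using AB unfolding L_def by blast
    then show ?thesis
      using Well_order_total[OF wo ik(1,2)] mono by blast
  qed
  moreover have "\<exists>A\<in>L. S \<subseteq> A" if bounded: "S \<in> bornology (prod_ballean \<E>X \<E>Y)" for S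
  proof -
    obtain C D where "bbounded \<E>X C" "bbounded \<E>Y D" and S: "S \<subseteq> C \<times> D"
      using bounded unfolding mem_bornology_iff bbounded_prod_ballean_iff by blast
    then obtain i j where ij: "i \<in> Field r" "j \<in> Field r" "C \<subseteq> MX i" "D \<subseteq> MY j"
      using cofinal_chainD(3)[OF MX] cofinal_chainD(3)[OF MY] by blast
    show ?thesis
    proof (cases "(i, j) \<in> r")
      case True
      then have "S \<subseteq> MX j \<times> MY j"
        using S ij(3,4) cofinal_chainD(2)[OF MX True] by blast
      then show ?thesis
        using ij(2) unfolding L_def by blast
    next
      case False
      then have "(j, i) \<in> r"
        using Well_order_total[OF wo ij(1,2)] by blast
      then have "S \<subseteq> MX i \<times> MY i"
        using S ij(3,4) cofinal_chainD(2)[OF MY] by blast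
      then show ?thesis
        using ij(1) unfolding L_def by blast
    qed
  qed
  ultimately show ?thesis
    unfolding has_linear_base_def by (intro exI[of _ L]) blast
qed

end

section \<open>Maps between bornologies and bounded growth\<close>

definition bornologous :: "('a \<times> 'a) set set \<Rightarrow> ('b \<times> 'b) set set \<Rightarrow> ('a \<Rightarrow> 'b) \<Rightarrow> bool" where
  "bornologous \<E>A \<E>B p \<longleftrightarrow> (\<forall>C. bbounded \<E>A C \<longrightarrow> bbounded \<E>B (p ` C))"

definition proper_map :: "('a \<times> 'a) set set \<Rightarrow> ('b \<times> 'b) set set \<Rightarrow> ('a \<Rightarrow> 'b) \<Rightarrow> bool" where
  "proper_map \<E>A \<E>B p \<longleftrightarrow> (\<forall>D. bbounded \<E>B D \<longrightarrow> bbounded \<E>A (p -` D))"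

text \<open>A point \<open>x\<close> is sent to a point outside \<open>MB i\<close>, where \<open>i\<close> is the first stage of the
  chain \<open>MA\<close> containing \<open>x\<close>.\<close>
lemma ex_bornologous_proper_map:
  assumes wo: "Well_order r" and bA: "ballean \<E>A" and bB: "ballean \<E>B"
    and uB: "unbounded_ballean \<E>B" and MA: "cofinal_chain \<E>A r MA" and MB: "cofinal_chain \<E>B r MB"
    and small: "segment_unions_bounded \<E>B r"
  obtains p where "bornologous \<E>A \<E>B p" "proper_map \<E>A \<E>B p"
proof -
  define stage where "stage x = wo_rel.minim r {i \<in> Field r. x \<in> MA i}" for x
  have stages: "{i \<in> Field r. x \<in> MA i} \<subseteq> Field r" "{i \<in> Field r. x \<in> MA i} \<noteq> {}" for x
    using cofinal_chainD(3)[OF MA bbounded_singleton[OF bA, of x]] by auto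
  have stage: "stage x \<in> Field r" "x \<in> MA (stage x)" for x
    using wo_rel.minim_in[OF _ stages] wo unfolding stage_def wo_rel_def by auto
  have stage_least: "(stage x, i) \<in> r" if "i \<in> Field r" "x \<in> MA i" for x i
    using wo_rel.minim_least[OF _ stages(1)] wo that unfolding stage_def wo_rel_def by blast
  have "\<exists>y. y \<notin> MB i" if "i \<in> Field r" for i
    using ex_not_in_bbounded[OF uB cofinal_chainD(1)[OF MB that]] .
  then obtain q where q: "\<And>i. i \<in> Field r \<Longrightarrow> q i \<notin> MB i"
    by metis
  have "bbounded \<E>B ((q \<circ> stage) ` C)" if C: "bbounded \<E>A C" for C
  proof -
    obtain i where i: "i \<in> Field r" "C \<subseteq> MA i"
      using cofinal_chainD(3)[OF MA C] by blast
    have "stage ` C \<subseteq> insert i (underS r i)"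
      using stage_least i unfolding underS_def by blast
    then have "(q \<circ> stage) ` C \<subseteq> {q i} \<union> q ` underS r i"
      by auto
    then show ?thesis
      using bbounded_Un[OF bB bbounded_singleton[OF bB] bbounded_image_underS[OF bB small i(1)]]
        bbounded_subset by blast
  qed
  moreover have "bbounded \<E>A ((q \<circ> stage) -` D)" if D: "bbounded \<E>B D" for D
  proof -
    obtain i where i: "i \<in> Field r" "D \<subseteq> MB i"
      using cofinal_chainD(3)[OF MB D] by blast
    have "(stage x, i) \<in> r" if "(q \<circ> stage) x \<in> D" for x
    proof (rule ccontr)
      assume "(stage x, i) \<notin> r"
      then have "MB i \<subseteq> MB (stage x)"
        using Well_order_total[OF wo stage(1) i(1)] cofinal_chainD(2)[OF MB] by blast
      then show False
        using q[OF stage(1)] that i(2) by auto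
    qed
    then have "(q \<circ> stage) -` D \<subseteq> MA i"
      using stage(2) cofinal_chainD(2)[OF MA] by blast
    then show ?thesis
      using bbounded_subset[OF cofinal_chainD(1)[OF MA i(1)]] by blast
  qed
  ultimately show thesis
    using that unfolding bornologous_def proper_map_def by blast
qed

lemma asymp_disjoint_graph_axis:
  assumes bX: "ballean \<E>X" and bY: "ballean \<E>Y" and p: "proper_map \<E>X \<E>Y p"
  shows "asymp_disjoint (prod_ballean \<E>X \<E>Y) (range (\<lambda>x. (x, p x))) (UNIV \<times> {y0})"
  unfolding asymp_disjoint_def
proof
  fix P
  assume "P \<in> prod_ballean \<E>X \<E>Y"
  then obtain E1 E2 where E: "E1 \<in> \<E>X" "E2 \<in> \<E>Y" "P = prod_entourage E1 E2"
    unfolding prod_ballean_eq by blast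
  define D where "D = E2 `` {y0}"
  define K where "K = p -` (converse E2 `` D)"
  have D: "bbounded \<E>Y D"
    unfolding D_def bbounded_def using E(2) by blast
  have "bbounded \<E>X K"
    using p bbounded_converse_Image[OF bY D E(2)] unfolding K_def proper_map_def by blast
  then have K: "bbounded \<E>X (E1 `` K)"
    using bbounded_Image[OF bX _ E(1)] by blast
  have "P `` range (\<lambda>x. (x, p x)) \<inter> P `` (UNIV \<times> {y0}) \<subseteq> E1 `` K \<times> D"
    unfolding E(3) K_def D_def by force
  then show "bbounded (prod_ballean \<E>X \<E>Y) (P `` range (\<lambda>x. (x, p x)) \<inter> P `` (UNIV \<times> {y0}))"
    unfolding bbounded_prod_ballean_iff using K D by blast
qed

text \<open>The growth relation \<open>G\<close> is read off a neighbourhood \<open>U\<close> of the graph of \<open>p\<close> that is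
  disjoint from a neighbourhood of a horizontal axis.\<close>
lemma bounded_growth_if_normal_prod:
  assumes bX: "ballean \<E>X" and bY: "ballean \<E>Y" and normal: "normal_ballean (prod_ballean \<E>X \<E>Y)"
    and p: "bornologous \<E>X \<E>Y p" "proper_map \<E>X \<E>Y p"
  shows "bounded_growth \<E>X"
proof -
  fix y0
  obtain U V where U: "asymp_nbhd (prod_ballean \<E>X \<E>Y) U (range (\<lambda>x. (x, p x)))"
    and V: "asymp_nbhd (prod_ballean \<E>X \<E>Y) V (UNIV \<times> {y0})" and UV: "U \<inter> V = {}"
    using normal asymp_disjoint_graph_axis[OF bX bY p(2), of y0] unfolding normal_ballean_def by blast
  define G where "G = {(x, x'). (x', p x) \<in> U}"
  have "bbounded \<E>X (G `` K)" if K: "bbounded \<E>X K" for K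
  proof -
    obtain C where C: "bbounded \<E>X C" "(- C) \<times> p ` K \<subseteq> V"
      using asymp_nbhd_axis_contains_strip[OF bX bY V] p(1) K unfolding bornologous_def by blast
    have "G `` K \<subseteq> C"
      using C(2) UV unfolding G_def by blast
    then show ?thesis
      using bbounded_subset[OF C(1)] by blast
  qed
  moreover have "\<exists>K. bbounded \<E>X K \<and> (\<forall>x. x \<notin> K \<longrightarrow> E `` {x} \<subseteq> G `` {x})" if E: "E \<in> \<E>X" for E
  proof -
    obtain F where F: "F \<in> \<E>Y"
      using ballean_entourage_containing[OF bY] by blast
    obtain C D where "bbounded \<E>X C" and D: "bbounded \<E>Y D"
      "prod_entourage E F `` range (\<lambda>x. (x, p x)) - U \<subseteq> C \<times> D"
      using asymp_nbhd_prod_ballean_rectangle[OF U E F] .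
    have "E `` {x} \<subseteq> G `` {x}" if "x \<notin> p -` D" for x
    proof
      fix x'
      assume "x' \<in> E `` {x}"
      then have "((x, p x), (x', p x)) \<in> prod_entourage E F"
        using ballean_Id_subset[OF bY F] by auto
      then have "(x', p x) \<in> prod_entourage E F `` range (\<lambda>x. (x, p x))"
        by (rule ImageI) (rule rangeI)
      then show "x' \<in> G `` {x}"
        using D(2) that unfolding G_def by blast
    qed
    then show ?thesis
      using D(1) p(2) unfolding proper_map_def by blast
  qed
  ultimately show ?thesis
    unfolding bounded_growth_def by blast
qed

theorem theorem1p4:
  fixes \<E>X :: "('a \<times> 'a) set set" and \<E>Y :: "('b \<times> 'b) set set"
  assumes "ballean \<E>X" and "ballean \<E>Y"
    and "unbounded_ballean \<E>X" and "unbounded_ballean \<E>Y"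
    and "normal_ballean (prod_ballean \<E>X \<E>Y)"
  shows "((\<exists>F. is_add (bornology \<E>X) F) \<and> (\<exists>F. is_cof (bornology \<E>X) F) \<and>
         (\<exists>F. is_add (bornology \<E>Y) F) \<and> (\<exists>F. is_cof (bornology \<E>Y) F) \<and>
         (\<forall>F1 F2 F3 F4. is_add (bornology \<E>X) F1 \<and> is_cof (bornology \<E>X) F2 \<and>
            is_add (bornology \<E>Y) F3 \<and> is_cof (bornology \<E>Y) F4 \<longrightarrow>
            (card_of F1, card_of F2) \<in> ordIso \<and> (card_of F2, card_of F3) \<in> ordIso \<and>
            (card_of F3, card_of F4) \<in> ordIso)) \<and>
         has_linear_base (prod_ballean \<E>X \<E>Y) \<and>
         bounded_growth \<E>X \<and> bounded_growth \<E>Y"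
proof -
  obtain \<Phi> \<Psi> where dichotomy: "bounded_dichotomy \<E>X \<E>Y \<Phi> \<Psi>"
    using bounded_dichotomy_if_normal_prod[OF assms(1,2,5)] by blast
  have invariants: "(\<exists>F. is_add (bornology \<E>X) F) \<and> (\<exists>F. is_cof (bornology \<E>X) F) \<and>
      (\<exists>F. is_add (bornology \<E>Y) F) \<and> (\<exists>F. is_cof (bornology \<E>Y) F)"
    using is_add_exists[OF bornology_no_ub[OF assms(1,3)]]
      is_add_exists[OF bornology_no_ub[OF assms(2,4)]]
      is_cof_exists[of "bornology \<E>X"] is_cof_exists[of "bornology \<E>Y"] by blast
  obtain r :: "'a set rel" and MX MY where r: "Well_order r"
      "cofinal_chain \<E>X r MX" "cofinal_chain \<E>Y r MY"
      "segment_unions_bounded \<E>X r" "segment_unions_bounded \<E>Y r"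
    using cofinal_chains_exist[OF assms(1-4) dichotomy] by blast
  obtain p where p: "bornologous \<E>X \<E>Y p" "proper_map \<E>X \<E>Y p"
    using ex_bornologous_proper_map[OF r(1) assms(1,2,4) r(2,3,5)] by blast
  obtain p' where p': "bornologous \<E>Y \<E>X p'" "proper_map \<E>Y \<E>X p'"
    using ex_bornologous_proper_map[OF r(1) assms(2,1,3) r(3,2,4)] by blast
  show ?thesis
    using invariants bornology_add_cof_ordIso[OF assms(1-4) dichotomy]
      has_linear_base_prod_ballean[OF r(1-3)]
      bounded_growth_if_normal_prod[OF assms(1,2,5) p]
      bounded_growth_if_normal_prod[OF assms(2,1) normal_prod_ballean_swap[OF assms(5)] p']
    by blast
qed

end
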